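(* Let $N\ge2$. In the pair distinguishability task, Alice receives $x\in\{1,\dots,N\}$ uniformly at random, and Bob receives a pair $(x_1,x_2)$ with $1\le x_1<x_2\le N$ and the promise that Alice's input lies in $\{x_1,x_2\}$; Bob outputs $z\in\{1,\dots,N\}$ aiming to guess Alice's input. The success metric is $$\mathcal{S}(N)=\frac{1}{N(N-1)}\sum_{1\le x<x'\le N}\big[p(x|x,(x,x'))+p(x'|x',(x,x'))\big].$$ For a classical protocol with encoding $p_e(m|x)$ (messages $m$ from a finite set of arbitrary size) and decoding $p_d(z|y,m)$, so that $p(z|x,y)=\sum_mp_e(m|x)p_d(z|y,m)$, let $\mathcal{S}_C(N)$ be its success metric and $\mathcal{D}_C=\frac1N\sum_m\max_xp_e(m|x)$ its distinguishability. Then every classical protocol satisfies $$(N-1)\big(\mathcal{S}_C(N)-1\big)+1\le\mathcal{D}_C.$$ *)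

theory Defs
  imports Complex_Main
begin

text \<open>Messages range over a finite type 'm.
  pe x m = p_e(m|x), pd y m z = p_d(z|y,m).\<close>

definition pair_inputs :: "nat \<Rightarrow> (nat \<times> nat) set" where
  "pair_inputs N = {(x1, x2). 1 \<le> x1 \<and> x1 < x2 \<and> x2 \<le> N}"

definition classical_protocol ::
  "nat \<Rightarrow> (nat \<Rightarrow> 'm::finite \<Rightarrow> real) \<Rightarrow> (nat \<times> nat \<Rightarrow> 'm \<Rightarrow> nat \<Rightarrow> real) \<Rightarrow> bool" where
  "classical_protocol N pe pd \<longleftrightarrow>
     (\<forall>x\<in>{1..N}. (\<forall>m. pe x m \<ge> 0) \<and> (\<Sum>m\<in>UNIV. pe x m) = 1) \<and>
     (\<forall>y\<in>pair_inputs N. \<forall>m. (\<forall>z\<in>{1..N}. pd y m z \<ge> 0) \<and> (\<Sum>z\<in>{1..N}. pd y m z) = 1)"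

definition cprob ::
  "(nat \<Rightarrow> 'm::finite \<Rightarrow> real) \<Rightarrow> (nat \<times> nat \<Rightarrow> 'm \<Rightarrow> nat \<Rightarrow> real) \<Rightarrow> nat \<Rightarrow> nat \<Rightarrow> nat \<times> nat \<Rightarrow> real" where
  "cprob pe pd z x y = (\<Sum>m\<in>UNIV. pe x m * pd y m z)"

definition success_metric ::
  "nat \<Rightarrow> (nat \<Rightarrow> 'm::finite \<Rightarrow> real) \<Rightarrow> (nat \<times> nat \<Rightarrow> 'm \<Rightarrow> nat \<Rightarrow> real) \<Rightarrow> real" where
  "success_metric N pe pd =
     1 / (real N * (real N - 1)) *
     (\<Sum>(x, x')\<in>pair_inputs N. cprob pe pd x x (x, x') + cprob pe pd x' x' (x, x'))"

definition distinguishability ::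
  "nat \<Rightarrow> (nat \<Rightarrow> 'm::finite \<Rightarrow> real) \<Rightarrow> real" where
  "distinguishability N pe = 1 / real N * (\<Sum>m\<in>UNIV. Max ((\<lambda>x. pe x m) ` {1..N}))"

end

theory Submission
  imports Defs
begin

text \<open>For a pair \<open>(x, x')\<close> and a message \<open>m\<close>, Bob outputs \<open>x\<close> and \<open>x'\<close> with total
  probability at most one, so the pair contributes at most \<open>\<Sum>\<^sub>m max (p\<^sub>e(m|x)) (p\<^sub>e(m|x'))\<close>
  to the success sum. For fixed \<open>m\<close> and nonnegative \<open>a(x) = p\<^sub>e(m|x)\<close>, the sum of
  \<open>max (a x) (a x')\<close> over all pairs is at most \<open>(N - 2) \<Sum>\<^sub>x a(x) + max\<^sub>x a(x)\<close>: adding the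
  input \<open>N + 1\<close> with value \<open>b\<close> adds \<open>\<Sum>\<^sub>x max (a x) b\<close>, where only the maximal \<open>a x\<close> can fail to
  be absorbed into \<open>a x + b\<close>. Summing over \<open>m\<close> and using \<open>\<Sum>\<^sub>m p\<^sub>e(m|x) = 1\<close> bounds the success
  sum by \<open>N (N - 2) + N \<D>\<^sub>C\<close>, which rearranges to the claim.\<close>

lemma finite_pair_inputs: "finite (pair_inputs N)"
  by (rule finite_subset[of _ "{1..N} \<times> {1..N}"]) (auto simp: pair_inputs_def)

lemma pair_inputs_Suc:
  "pair_inputs (Suc N) = pair_inputs N \<union> (\<lambda>x. (x, Suc N)) ` {1..N}"
  by (auto simp: pair_inputs_def)

lemma sum_pair_inputs_Suc:
  "(\<Sum>(x1, x2)\<in>pair_inputs (Suc N). f x1 x2) =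
     (\<Sum>(x1, x2)\<in>pair_inputs N. f x1 x2) + (\<Sum>x\<in>{1..N}. f x (Suc N))"
proof -
  have "pair_inputs N \<inter> (\<lambda>x. (x, Suc N)) ` {1..N} = {}"
    by (auto simp: pair_inputs_def)
  moreover have "inj_on (\<lambda>x. (x, Suc N)) {1..N}"
    by (simp add: inj_on_def)
  ultimately show ?thesis
    by (simp add: pair_inputs_Suc sum.union_disjoint finite_pair_inputs sum.reindex)
qed

lemma mult_add_mult_le_max:
  fixes u v p q :: real
  assumes "0 \<le> p" "0 \<le> q" "p + q \<le> 1" "0 \<le> max u v"
  shows "u * p + v * q \<le> max u v"
proof -
  have "u * p + v * q \<le> max u v * p + max u v * q"
    using assms by (intro add_mono mult_right_mono) auto
  also have "\<dots> \<le> max u v"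
    using mult_left_mono[OF assms(3,4)] by (simp add: distrib_left)
  finally show ?thesis .
qed

lemma sum_max_const_le:
  fixes a :: "'a \<Rightarrow> real"
  assumes "finite A" "A \<noteq> {}" "\<forall>x\<in>A. 0 \<le> a x" "0 \<le> b"
  shows "(\<Sum>x\<in>A. max (a x) b)
           \<le> (\<Sum>x\<in>A. a x) + (real (card A) - 1) * b + max (Max (a ` A)) b - Max (a ` A)"
proof -
  have "Max (a ` A) \<in> a ` A"
    using assms(1,2) by simp
  then obtain k where k: "k \<in> A" "a k = Max (a ` A)"
    by (metis imageE)
  have "(\<Sum>x\<in>A. max (a x) b) = max (a k) b + (\<Sum>x\<in>A - {k}. max (a x) b)"
    using k assms(1) by (simp add: sum.remove)
  also have "(\<Sum>x\<in>A - {k}. max (a x) b) \<le> (\<Sum>x\<in>A - {k}. a x + b)"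
    using assms(3,4) by (intro sum_mono) auto
  also have "\<dots> = (\<Sum>x\<in>A. a x) - a k + (real (card A) - 1) * b"
    using k assms(1) card_gt_0_iff[of A] assms(2) by (simp add: sum.distrib sum_diff1 of_nat_diff)
  finally show ?thesis
    using k by linarith
qed

lemma sum_pair_inputs_max_le:
  fixes a :: "nat \<Rightarrow> real"
  assumes "N \<ge> 1" "\<forall>x\<in>{1..N}. 0 \<le> a x"
  shows "(\<Sum>(x1, x2)\<in>pair_inputs N. max (a x1) (a x2))
           \<le> (real N - 2) * (\<Sum>x\<in>{1..N}. a x) + Max (a ` {1..N})"
  using assms
proof (induction N rule: nat_induct_at_least)
  case base
  have "pair_inputs 1 = {}"
    by (auto simp: pair_inputs_def)
  then show ?case
    by simp
next
  case (Suc n)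
  let ?b = "a (Suc n)"
  have nonneg: "\<forall>x\<in>{1..n}. 0 \<le> a x" "0 \<le> ?b"
    using Suc.prems by auto
  have "Max (a ` {1..Suc n}) = max (Max (a ` {1..n})) ?b"
  proof -
    have "a ` {1..Suc n} = insert ?b (a ` {1..n})"
      by (auto simp: atLeastAtMostSuc_conv)
    then show ?thesis
      using Suc.hyps(1) by (simp add: max.commute)
  qed
  moreover have "(\<Sum>x\<in>{1..n}. max (a x) ?b)
      \<le> (\<Sum>x\<in>{1..n}. a x) + (real n - 1) * ?b + max (Max (a ` {1..n})) ?b - Max (a ` {1..n})"
    using sum_max_const_le[of "{1..n}" a ?b] Suc.hyps(1) nonneg by simp
  moreover have "0 \<le> (\<Sum>x\<in>{1..n}. a x)"
    using nonneg(1) by (intro sum_nonneg) auto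
  ultimately show ?case
    using Suc.IH nonneg(1)
    by (simp add: sum_pair_inputs_Suc[where f = "\<lambda>x1 x2. max (a x1) (a x2)"] algebra_simps)
qed

context
  fixes N :: nat
    and pe :: "nat \<Rightarrow> 'm::finite \<Rightarrow> real"
    and pd :: "nat \<times> nat \<Rightarrow> 'm \<Rightarrow> nat \<Rightarrow> real"
  assumes protocol: "classical_protocol N pe pd"
begin

lemma pair_success_le_sum_max:
  assumes y: "(x1, x2) \<in> pair_inputs N"
  shows "cprob pe pd x1 x1 (x1, x2) + cprob pe pd x2 x2 (x1, x2)
           \<le> (\<Sum>m\<in>UNIV. max (pe x1 m) (pe x2 m))"
proof -
  have x: "x1 \<in> {1..N}" "x2 \<in> {1..N}" "x1 \<noteq> x2"
    using y by (auto simp: pair_inputs_def)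
  have pe_nonneg: "0 \<le> pe x1 m" for m
    using protocol x by (auto simp: classical_protocol_def)
  have pd_nonneg: "0 \<le> pd (x1, x2) m z" if "z \<in> {1..N}" for m z
    using protocol y that by (auto simp: classical_protocol_def)
  have pd_sum: "(\<Sum>z\<in>{1..N}. pd (x1, x2) m z) = 1" for m
    using protocol y by (auto simp: classical_protocol_def)
  have "pe x1 m * pd (x1, x2) m x1 + pe x2 m * pd (x1, x2) m x2 \<le> max (pe x1 m) (pe x2 m)" for m
  proof (rule mult_add_mult_le_max)
    have "pd (x1, x2) m x1 + pd (x1, x2) m x2 = (\<Sum>z\<in>{x1, x2}. pd (x1, x2) m z)"
      using x by simp
    also have "\<dots> \<le> (\<Sum>z\<in>{1..N}. pd (x1, x2) m z)"
      using x pd_nonneg by (intro sum_mono2) auto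
    finally show "pd (x1, x2) m x1 + pd (x1, x2) m x2 \<le> 1"
      using pd_sum by simp
  qed (use x pd_nonneg pe_nonneg in \<open>auto simp: le_max_iff_disj\<close>)
  then show ?thesis
    by (simp add: cprob_def sum.distrib[symmetric] sum_mono)
qed

lemma success_sum_le:
  assumes "N \<ge> 1"
  shows "(\<Sum>(x, x')\<in>pair_inputs N. cprob pe pd x x (x, x') + cprob pe pd x' x' (x, x'))
           \<le> real N * (real N - 2 + distinguishability N pe)"
proof -
  have pe_nonneg: "\<forall>x\<in>{1..N}. 0 \<le> pe x m" for m
    using protocol by (auto simp: classical_protocol_def)
  have pe_sum: "(\<Sum>m\<in>UNIV. pe x m) = 1" if "x \<in> {1..N}" for x
    using protocol that by (auto simp: classical_protocol_def)
  have "(\<Sum>(x, x')\<in>pair_inputs N. cprob pe pd x x (x, x') + cprob pe pd x' x' (x, x'))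
      \<le> (\<Sum>(x1, x2)\<in>pair_inputs N. \<Sum>m\<in>UNIV. max (pe x1 m) (pe x2 m))"
    using pair_success_le_sum_max by (intro sum_mono) auto
  also have "\<dots> = (\<Sum>m\<in>UNIV. \<Sum>(x1, x2)\<in>pair_inputs N. max (pe x1 m) (pe x2 m))"
    unfolding case_prod_beta by (rule sum.swap)
  also have "\<dots> \<le> (\<Sum>m\<in>UNIV. (real N - 2) * (\<Sum>x\<in>{1..N}. pe x m) + Max ((\<lambda>x. pe x m) ` {1..N}))"
    using sum_pair_inputs_max_le[OF assms pe_nonneg] by (intro sum_mono) simp
  also have "\<dots> = (real N - 2) * (\<Sum>x\<in>{1..N}. \<Sum>m\<in>UNIV. pe x m)
                    + (\<Sum>m\<in>UNIV. Max ((\<lambda>x. pe x m) ` {1..N}))"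
    by (simp add: sum.distrib sum_distrib_left sum.swap[of _ UNIV])
  also have "\<dots> = real N * (real N - 2 + distinguishability N pe)"
    using pe_sum assms by (simp add: distinguishability_def algebra_simps)
  finally show ?thesis .
qed

end

theorem theorem7:
  fixes N :: nat
    and pe :: "nat \<Rightarrow> 'm::finite \<Rightarrow> real"
    and pd :: "nat \<times> nat \<Rightarrow> 'm \<Rightarrow> nat \<Rightarrow> real"
  assumes "N \<ge> 2"
    and "classical_protocol N pe pd"
  shows "(real N - 1) * (success_metric N pe pd - 1) + 1 \<le> distinguishability N pe"
proof -
  have N: "real N > 1"
    using assms(1) by simp
  have "(real N - 1) * (success_metric N pe pd - 1) + 1
      = (\<Sum>(x, x')\<in>pair_inputs N. cprob pe pd x x (x, x') + cprob pe pd x' x' (x, x')) / real N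
          - real N + 2"
    using N by (simp add: success_metric_def field_simps)
  also have "\<dots> \<le> real N * (real N - 2 + distinguishability N pe) / real N - real N + 2"
    using divide_right_mono[OF success_sum_le[OF assms(2)], of "real N"] assms(1) by simp
  also have "\<dots> = distinguishability N pe"
    using N by simp
  finally show ?thesis .
qed

end
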